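(* Let $P$ and $Q$ be stochastic matrices over a countable set $\Omega$. (1) If $\rho$ is a *-automorphism of $\ell^\infty(\Omega)$ and there exists a $\rho$-similarity from $Arv(P)$ to $Arv(Q)$, then for all $i,j$: $P_{ij}>0\iff Q_{\sigma_\rho(i)\sigma_\rho(j)}>0$. (2) If $\Omega$ is finite, $P$ and $Q$ are essential, and $\sigma$ is a permutation of $\Omega$ with $P_{ij}>0\iff Q_{\sigma(i)\sigma(j)}>0$ for all $i,j$, then there exists a $\rho_\sigma$-similarity from $Arv(P)$ to $Arv(Q)$.
   Context: A stochastic matrix has nonnegative entries and row sums $1$; $P^{(n)}_{ij}$ is the $(i,j)$ entry of $P^n$. $P$ is essential if no state $i$ has some $j$ and $n\ge1$ with $P^{(n)}_{ij}>0$ but $P^{(m)}_{ji}=0$ for all $m\ge1$. For a permutation $\sigma$, $\rho_\sigma(f)=f\circ\sigma^{-1}$; for a *-automorphism $\rho$ of $\ell^\infty(\Omega)$, $\sigma_\rho$ is the permutation with $\rho(p_j)=p_{\sigma_\rho(j)}$, $p_j$ the indicator of $\{j\}$. $Arv(P)$: $Arv(P)_0=\ell^\infty(\Omega)$; $Arv(P)_n$ ($n\ge1$) is the set of complex $\Omega\times\Omega$ matrices $A=[a_{ij}]$ with $a_{ij}=0$ whenever $P^{(n)}_{ij}=0$ and $\sup_j\sum_i|a_{ij}|^2<\infty$, a W*-correspondence over $\ell^\infty(\Omega)$ with actions by diagonal matrices and inner product $\mathrm{Diag}(A^*B)$; $U^P_{n,m}(A\otimes B)=(\sqrt{P^{n+m}})^{\flat}*[(\sqrt{P^n}*A)(\sqrt{P^m}*B)]$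 for $n,m\ge1$ ($*$ entrywise product, $\sqrt\cdot$ entrywise, $M^\flat_{ik}=M_{ik}^{-1}$ if $M_{ik}>0$, else $0$), $U_{0,n},U_{n,0}$ module actions. A $\rho$-similarity $V:Arv(P)\to Arv(Q)$ is a family $(V_n)_{n\ge0}$ with $V_0=\rho$, each $V_n:Arv(P)_n\to Arv(Q)_n$ ($n\ge1$) a bijective bounded linear map with $V_n(a\xi b)=\rho(a)V_n(\xi)\rho(b)$, $\sup_n\max(\|V_n\|,\|V_n^{-1}\|)<\infty$, and $V_{n+m}U^P_{n,m}=U^Q_{n,m}(V_n\otimes V_m)$ for all $n,m$. *)

theory Defs
  imports "HOL-Analysis.Analysis"
begin

definition stochastic :: "('a \<Rightarrow> 'a \<Rightarrow> real) \<Rightarrow> bool" where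
  "stochastic P \<longleftrightarrow> (\<forall>i j. 0 \<le> P i j) \<and> (\<forall>i. ((\<lambda>j. P i j) has_sum 1) UNIV)"

fun matpow :: "('a \<Rightarrow> 'a \<Rightarrow> real) \<Rightarrow> nat \<Rightarrow> 'a \<Rightarrow> 'a \<Rightarrow> real" where
  "matpow P 0 = (\<lambda>i k. if i = k then 1 else 0)"
| "matpow P (Suc n) = (\<lambda>i k. \<Sum>\<^sub>\<infinity>j. matpow P n i j * P j k)"

definition essential :: "('a \<Rightarrow> 'a \<Rightarrow> real) \<Rightarrow> bool" where
  "essential P \<longleftrightarrow> \<not> (\<exists>i j n. n \<ge> 1 \<and> matpow P n i j > 0 \<and>
                              (\<forall>m\<ge>1. matpow P m j i = 0))"

definition linf :: "('a \<Rightarrow> complex) set" where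
  "linf = {f. bounded (range f)}"

definition star_automorphism :: "(('a \<Rightarrow> complex) \<Rightarrow> ('a \<Rightarrow> complex)) \<Rightarrow> bool" where
  "star_automorphism \<rho> \<longleftrightarrow>
     bij_betw \<rho> linf linf \<and>
     (\<forall>f\<in>linf. \<forall>g\<in>linf. \<rho> (\<lambda>x. f x + g x) = (\<lambda>x. \<rho> f x + \<rho> g x)) \<and>
     (\<forall>c. \<forall>f\<in>linf. \<rho> (\<lambda>x. c * f x) = (\<lambda>x. c * \<rho> f x)) \<and>
     (\<forall>f\<in>linf. \<forall>g\<in>linf. \<rho> (\<lambda>x. f x * g x) = (\<lambda>x. \<rho> f x * \<rho> g x)) \<and>
     (\<forall>f\<in>linf. \<rho> (\<lambda>x. cnj (f x)) = (\<lambda>x. cnj (\<rho> f x)))"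

definition pt :: "'a \<Rightarrow> 'a \<Rightarrow> complex" where
  "pt j = (\<lambda>i. if i = j then 1 else 0)"

definition sigma_of :: "(('a \<Rightarrow> complex) \<Rightarrow> ('a \<Rightarrow> complex)) \<Rightarrow> 'a \<Rightarrow> 'a" where
  "sigma_of \<rho> j = (THE k. \<rho> (pt j) = pt k)"

definition rho_of :: "('a \<Rightarrow> 'a) \<Rightarrow> ('a \<Rightarrow> complex) \<Rightarrow> ('a \<Rightarrow> complex)" where
  "rho_of \<sigma> f = f \<circ> inv \<sigma>"

text \<open>Diagonal matrix of a function; elements of Arv(P)_0 = ell-infinity are represented
  as diagonal matrices.\<close>
definition diagm :: "('a \<Rightarrow> complex) \<Rightarrow> 'a \<Rightarrow> 'a \<Rightarrow> complex" where
  "diagm f = (\<lambda>i k. if i = k then f i else 0)"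

text \<open>Arv(P)_n.  For n = 0 (P^0 = identity) this is exactly the set of diagonal matrices
  with bounded diagonal, i.e. ell-infinity.\<close>
definition Arv :: "('a \<Rightarrow> 'a \<Rightarrow> real) \<Rightarrow> nat \<Rightarrow> ('a \<Rightarrow> 'a \<Rightarrow> complex) set" where
  "Arv P n = {A. (\<forall>i j. matpow P n i j = 0 \<longrightarrow> A i j = 0) \<and>
                 (\<forall>j. (\<lambda>i. (cmod (A i j))\<^sup>2) summable_on UNIV) \<and>
                 bdd_above (range (\<lambda>j. \<Sum>\<^sub>\<infinity>i. (cmod (A i j))\<^sup>2))}"

text \<open>Norm of the W*-correspondence: ||A|| = ||Diag(A^* A)||^(1/2).\<close>
definition arv_norm :: "('a \<Rightarrow> 'a \<Rightarrow> complex) \<Rightarrow> real" where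
  "arv_norm A = sqrt (SUP j. \<Sum>\<^sub>\<infinity>i. (cmod (A i j))\<^sup>2)"

definition bimod :: "('a \<Rightarrow> complex) \<Rightarrow> ('a \<Rightarrow> 'a \<Rightarrow> complex) \<Rightarrow> ('a \<Rightarrow> complex) \<Rightarrow> 'a \<Rightarrow> 'a \<Rightarrow> complex" where
  "bimod a X b = (\<lambda>i j. a i * X i j * b j)"

definition matmul :: "('a \<Rightarrow> 'a \<Rightarrow> complex) \<Rightarrow> ('a \<Rightarrow> 'a \<Rightarrow> complex) \<Rightarrow> 'a \<Rightarrow> 'a \<Rightarrow> complex" where
  "matmul X Y = (\<lambda>i k. \<Sum>\<^sub>\<infinity>j. X i j * Y j k)"

definition flat :: "('a \<Rightarrow> 'a \<Rightarrow> real) \<Rightarrow> 'a \<Rightarrow> 'a \<Rightarrow> real" where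
  "flat M = (\<lambda>i k. if M i k > 0 then 1 / M i k else 0)"

definition sqrtP :: "('a \<Rightarrow> 'a \<Rightarrow> real) \<Rightarrow> nat \<Rightarrow> 'a \<Rightarrow> 'a \<Rightarrow> real" where
  "sqrtP P n = (\<lambda>i k. sqrt (matpow P n i k))"

text \<open>The multiplication maps U^P_{n,m}, evaluated on elementary tensors A (x) B.
  For n = 0 or m = 0 they are the module actions (A resp. B is then diagonal).\<close>
definition UP :: "('a \<Rightarrow> 'a \<Rightarrow> real) \<Rightarrow> nat \<Rightarrow> nat \<Rightarrow> ('a \<Rightarrow> 'a \<Rightarrow> complex) \<Rightarrow>
                  ('a \<Rightarrow> 'a \<Rightarrow> complex) \<Rightarrow> 'a \<Rightarrow> 'a \<Rightarrow> complex" where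
  "UP P n m A B =
     (if n = 0 then (\<lambda>i k. A i i * B i k)
      else if m = 0 then (\<lambda>i k. A i k * B k k)
      else (\<lambda>i k. complex_of_real (flat (sqrtP P (n + m)) i k) *
              matmul (\<lambda>i j. complex_of_real (sqrtP P n i j) * A i j)
                     (\<lambda>j k. complex_of_real (sqrtP P m j k) * B j k) i k))"

definition similarity ::
  "('a \<Rightarrow> 'a \<Rightarrow> real) \<Rightarrow> ('a \<Rightarrow> 'a \<Rightarrow> real) \<Rightarrow> (('a \<Rightarrow> complex) \<Rightarrow> ('a \<Rightarrow> complex)) \<Rightarrow>
   (nat \<Rightarrow> ('a \<Rightarrow> 'a \<Rightarrow> complex) \<Rightarrow> ('a \<Rightarrow> 'a \<Rightarrow> complex)) \<Rightarrow> bool" where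
  "similarity P Q \<rho> V \<longleftrightarrow>
     (\<forall>f\<in>linf. V 0 (diagm f) = diagm (\<rho> f)) \<and>
     (\<forall>n\<ge>1. bij_betw (V n) (Arv P n) (Arv Q n)) \<and>
     (\<forall>n\<ge>1. \<forall>A\<in>Arv P n. \<forall>B\<in>Arv P n.
         V n (\<lambda>i j. A i j + B i j) = (\<lambda>i j. V n A i j + V n B i j)) \<and>
     (\<forall>n\<ge>1. \<forall>c. \<forall>A\<in>Arv P n. V n (\<lambda>i j. c * A i j) = (\<lambda>i j. c * V n A i j)) \<and>
     (\<forall>n\<ge>1. \<forall>a\<in>linf. \<forall>b\<in>linf. \<forall>X\<in>Arv P n.
         V n (bimod a X b) = bimod (\<rho> a) (V n X) (\<rho> b)) \<and>
     (\<exists>C. \<forall>n\<ge>1. (\<forall>A\<in>Arv P n. arv_norm (V n A) \<le> C * arv_norm A) \<and>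
                 (\<forall>B\<in>Arv Q n. arv_norm (inv_into (Arv P n) (V n) B) \<le> C * arv_norm B)) \<and>
     (\<forall>n m. \<forall>A\<in>Arv P n. \<forall>B\<in>Arv P m.
         V (n + m) (UP P n m A B) = UP Q n m (V n A) (V m B))"

end

theory Submission
  imports Defs
begin

text \<open>
  (1) A *-automorphism permutes the minimal projections \<open>pt j\<close>, and compressing a matrix by
  \<open>pt i\<close> on the left and \<open>pt j\<close> on the right cuts out its \<open>(i, j)\<close> entry. A similarity
  commutes with these compressions, so \<open>V\<^sub>1\<close> carries the matrix units at \<open>(i, j)\<close> injectively
  to those at \<open>(\<sigma> i, \<sigma> j)\<close>; since \<open>Arv(P)\<^sub>1\<close> contains the matrix unit at \<open>(i, j)\<close> iff
  \<open>P\<^sub>i\<^sub>j > 0\<close>, the support patterns of \<open>P\<close> and \<open>Q\<close> correspond.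

  (2) If \<open>\<sigma>\<close> matches the support patterns of \<open>P\<close> and \<open>Q\<close>, it matches those of all powers.
  Moving entries by \<open>\<sigma>\<close> and rescaling them by \<open>sqrt (P\<^sup>n) / sqrt (Q\<^sup>n)\<close> intertwines the
  multiplication maps. These weights stay bounded above and below because for a finite
  essential stochastic matrix the nonzero entries of all powers are bounded away from 0: the
  support pattern of the powers is eventually periodic, and essentiality lets every long path
  be rerouted through a power of bounded length.
\<close>

section \<open>Minimal projections and the support pattern of a similarity\<close>

lemma pt_in_linf: "pt j \<in> linf"
proof -
  have "range (pt j) \<subseteq> {0, 1}" by (auto simp: pt_def)
  then have "finite (range (pt j))" using finite_subset by blast
  then show ?thesis by (simp add: linf_def finite_imp_bounded)
qed

lemma pt_inject: "pt a = pt b \<longleftrightarrow> a = b"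
  by (metis pt_def one_neq_zero)

lemma pt_idem: "(\<lambda>x. pt j x * pt j x) = pt j"
  by (auto simp: pt_def)

lemma star_automorphism_zero:
  assumes "star_automorphism \<rho>"
  shows "\<rho> (\<lambda>x. 0) = (\<lambda>x. 0)"
proof -
  have zero: "(\<lambda>x::'a. 0::complex) \<in> linf" by (simp add: linf_def)
  have "\<forall>c. \<forall>f\<in>linf. \<rho> (\<lambda>x. c * f x) = (\<lambda>x. c * \<rho> f x)"
    using assms unfolding star_automorphism_def by blast
  from this[rule_format, OF zero, of 0] show ?thesis by simp
qed

lemma star_automorphism_pt_values:
  assumes "star_automorphism \<rho>"
  shows "\<rho> (pt j) x = 0 \<or> \<rho> (pt j) x = 1"
proof -
  have "\<rho> (pt j) = (\<lambda>x. \<rho> (pt j) x * \<rho> (pt j) x)"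
    using assms pt_in_linf[of j] pt_idem[of j] unfolding star_automorphism_def by metis
  then show ?thesis by (metis mult_cancel_right1 mult_eq_0_iff)
qed

lemma mult_pt_in_linf: "g \<in> linf \<Longrightarrow> (\<lambda>x. g x * pt j x) \<in> linf"
proof -
  assume "g \<in> linf"
  then obtain B where "\<forall>x. norm (g x) \<le> B" unfolding linf_def bounded_iff by auto
  then have "\<forall>x. norm (g x * pt j x) \<le> B"
    by (metis mult.right_neutral mult_zero_right norm_ge_zero norm_zero order_trans pt_def)
  then show ?thesis unfolding linf_def bounded_iff by auto
qed

text \<open>Minimality of projections is preserved: if \<open>\<rho> (pt j)\<close> were also 1 at some \<open>k' \<noteq> k\<close>,
  the preimage g of \<open>pt k\<close> would satisfy \<open>g = g * pt j = g j * pt j\<close>, and applying \<open>\<rho>\<close> would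
  make \<open>pt k\<close> a multiple of \<open>\<rho> (pt j)\<close>, which is nonzero at k'.\<close>
lemma star_automorphism_pt_eq:
  assumes sa: "star_automorphism \<rho>" and ek: "\<rho> (pt j) k = 1"
  shows "\<rho> (pt j) = pt k"
proof (rule ccontr)
  have bij: "bij_betw \<rho> linf linf"
    and mult: "\<forall>f\<in>linf. \<forall>g\<in>linf. \<rho> (\<lambda>x. f x * g x) = (\<lambda>x. \<rho> f x * \<rho> g x)"
    and scal: "\<forall>c. \<forall>f\<in>linf. \<rho> (\<lambda>x. c * f x) = (\<lambda>x. c * \<rho> f x)"
    using sa unfolding star_automorphism_def by auto
  define e where "e = \<rho> (pt j)"
  assume "\<rho> (pt j) \<noteq> pt k"
  then obtain k' where k': "k' \<noteq> k" "e k' = 1"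
    using ek star_automorphism_pt_values[OF sa, of j]
    unfolding e_def by (auto simp: pt_def fun_eq_iff split: if_splits)
  obtain g where g: "g \<in> linf" "\<rho> g = pt k"
    using bij pt_in_linf[of k] unfolding bij_betw_def by (metis imageE)
  have "\<rho> (\<lambda>x. g x * pt j x) = (\<lambda>x. pt k x * e x)"
    using mult g pt_in_linf[of j] unfolding e_def by auto
  also have "\<dots> = pt k" using ek unfolding e_def by (auto simp: pt_def)
  finally have "(\<lambda>x. g x * pt j x) = g"
    using bij mult_pt_in_linf[OF g(1)] g unfolding bij_betw_def inj_on_def by metis
  then have "g = (\<lambda>x. g j * pt j x)"
    by (metis (no_types, lifting) mult.commute pt_def mult_zero_left mult_1)
  then have "pt k = (\<lambda>x. g j * e x)"
    using scal pt_in_linf[of j] g unfolding e_def by metis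
  then have "pt k k' = g j * e k'" "pt k k = g j * e k" by metis+
  then show False using k' ek unfolding e_def by (simp add: pt_def)
qed

lemma star_automorphism_pt_ex:
  assumes sa: "star_automorphism \<rho>"
  shows "\<exists>k. \<rho> (pt j) = pt k"
proof -
  have "(\<lambda>x::'a. 0::complex) \<in> linf" by (simp add: linf_def)
  moreover have "pt j \<noteq> (\<lambda>x. 0)" by (metis pt_def one_neq_zero)
  ultimately have "\<rho> (pt j) \<noteq> (\<lambda>x. 0)"
    using sa pt_in_linf[of j] star_automorphism_zero[OF sa]
    unfolding star_automorphism_def bij_betw_def inj_on_def by metis
  then obtain k where "\<rho> (pt j) k = 1"
    using star_automorphism_pt_values[OF sa, of j] by blast
  then show ?thesis using star_automorphism_pt_eq[OF sa] by blast
qed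

lemma star_automorphism_pt:
  assumes "star_automorphism \<rho>"
  shows "\<rho> (pt j) = pt (sigma_of \<rho> j)"
proof -
  obtain k where k: "\<rho> (pt j) = pt k" using star_automorphism_pt_ex[OF assms] by blast
  then have "sigma_of \<rho> j = k" unfolding sigma_of_def by (simp add: pt_inject)
  with k show ?thesis by simp
qed

lemma
  fixes f :: "'a \<Rightarrow> 'b::{comm_monoid_add, t2_space}"
  assumes "\<And>x. x \<noteq> a \<Longrightarrow> f x = 0"
  shows summable_on_single_support: "f summable_on UNIV"
    and infsum_single_support: "infsum f UNIV = f a"
proof -
  have "f summable_on UNIV \<longleftrightarrow> f summable_on {a}"
    by (rule summable_on_cong_neutral) (use assms in auto)
  then show "f summable_on UNIV" by simp
  have "infsum f UNIV = infsum f {a}"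
    by (rule infsum_cong_neutral) (use assms in auto)
  then show "infsum f UNIV = f a" by simp
qed

lemma matpow_1 [simp]: "matpow P 1 = P"
proof (intro ext)
  fix i k
  have "matpow P 1 i k = (\<Sum>\<^sub>\<infinity>j. (if i = j then 1 else 0) * P j k)" by simp
  also have "\<dots> = P i k" by (subst infsum_single_support[where a = i]) auto
  finally show "matpow P 1 i k = P i k" .
qed

lemma matpow_Suc_0 [simp]: "matpow P (Suc 0) = P"
  using matpow_1 unfolding One_nat_def .

lemma Arv_entry_zero: "A \<in> Arv P n \<Longrightarrow> matpow P n i j = 0 \<Longrightarrow> A i j = 0"
  unfolding Arv_def by blast

definition matrix_unit :: "'a \<Rightarrow> 'a \<Rightarrow> complex \<Rightarrow> 'a \<Rightarrow> 'a \<Rightarrow> complex" where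
  "matrix_unit a b c = (\<lambda>i j. if i = a \<and> j = b then c else 0)"

lemma matrix_unit_in_Arv:
  assumes "matpow P n a b = 0 \<Longrightarrow> c = 0"
  shows "matrix_unit a b c \<in> Arv P n"
proof -
  have "(\<lambda>i. (cmod (matrix_unit a b c i j))\<^sup>2) summable_on UNIV" for j
    by (rule summable_on_single_support[where a = a]) (auto simp: matrix_unit_def)
  moreover have "(\<Sum>\<^sub>\<infinity>i. (cmod (matrix_unit a b c i j))\<^sup>2) \<le> (cmod c)\<^sup>2" for j
    by (subst infsum_single_support[where a = a]) (auto simp: matrix_unit_def)
  ultimately show ?thesis
    unfolding Arv_def using assms
    by (auto simp: matrix_unit_def intro!: bdd_aboveI2[where M = "(cmod c)\<^sup>2"])
qed

lemma matrix_unit_apply_self [simp]: "matrix_unit a b c a b = c"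
  by (simp add: matrix_unit_def)

lemma matrix_unit_eq_zero_iff: "matrix_unit a b c = (\<lambda>i j. 0) \<longleftrightarrow> c = 0"
  by (auto simp: matrix_unit_def fun_eq_iff)

lemma bimod_pt: "bimod (pt i) X (pt j) = matrix_unit i j (X i j)"
  by (auto simp: bimod_def pt_def matrix_unit_def fun_eq_iff)

lemma similarity_matrix_unit:
  assumes "star_automorphism \<rho>" and "similarity P Q \<rho> V" and "X \<in> Arv P 1"
  shows "V 1 (matrix_unit i j (X i j))
           = matrix_unit (sigma_of \<rho> i) (sigma_of \<rho> j) (V 1 X (sigma_of \<rho> i) (sigma_of \<rho> j))"
proof -
  have "V 1 (bimod (pt i) X (pt j)) = bimod (\<rho> (pt i)) (V 1 X) (\<rho> (pt j))"
    using assms(2,3) pt_in_linf unfolding similarity_def by (metis order_refl)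
  then show ?thesis by (simp add: bimod_pt star_automorphism_pt[OF assms(1)])
qed

lemma zero_in_Arv: "(\<lambda>i j. 0) \<in> Arv P n"
  using matrix_unit_in_Arv[of P n undefined undefined 0] by (simp add: matrix_unit_def)

lemma similarity_zero:
  assumes "similarity P Q \<rho> V" and "n \<ge> 1"
  shows "V n (\<lambda>i j. 0) = (\<lambda>i j. 0)"
proof -
  have "\<forall>c. \<forall>A\<in>Arv P n. V n (\<lambda>i j. c * A i j) = (\<lambda>i j. c * V n A i j)"
    using assms unfolding similarity_def by blast
  from this[rule_format, OF zero_in_Arv, of 0] show ?thesis by simp
qed

lemma similarity_bij_betw_1:
  assumes "similarity P Q \<rho> V"
  shows "bij_betw (V 1) (Arv P 1) (Arv Q 1)"
  using assms unfolding similarity_def by auto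

lemma similarity_entry_nonzero:
  assumes sa: "star_automorphism \<rho>" and sim: "similarity P Q \<rho> V" and "P i j \<noteq> 0"
  shows "Q (sigma_of \<rho> i) (sigma_of \<rho> j) \<noteq> 0"
proof -
  define s where "s = sigma_of \<rho>"
  define Y where "Y = V 1 (matrix_unit i j 1)"
  have X: "matrix_unit i j 1 \<in> Arv P 1"
    using assms(3) by (intro matrix_unit_in_Arv) (simp del: matpow.simps)
  then have Y: "Y \<in> Arv Q 1"
    unfolding Y_def by (rule bij_betw_apply[OF similarity_bij_betw_1[OF sim]])
  have "Y \<noteq> (\<lambda>i j. 0)"
    using inj_onD[OF bij_betw_imp_inj_on[OF similarity_bij_betw_1[OF sim]] _ X zero_in_Arv]
      similarity_zero[OF sim, of 1]
    unfolding Y_def by (auto simp: matrix_unit_eq_zero_iff)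
  moreover have "Y = matrix_unit (s i) (s j) (Y (s i) (s j))"
    using similarity_matrix_unit[OF sa sim X, of i j] unfolding Y_def s_def by simp
  ultimately have "Y (s i) (s j) \<noteq> 0"
    by (metis matrix_unit_eq_zero_iff)
  then show ?thesis
    using Arv_entry_zero[OF Y] unfolding s_def by (metis matpow_1)
qed

lemma similarity_entry_nonzero_inv:
  assumes sa: "star_automorphism \<rho>" and sim: "similarity P Q \<rho> V"
    and "Q (sigma_of \<rho> i) (sigma_of \<rho> j) \<noteq> 0"
  shows "P i j \<noteq> 0"
proof -
  define s where "s = sigma_of \<rho>"
  have bij: "bij_betw (V 1) (Arv P 1) (Arv Q 1)" by (rule similarity_bij_betw_1[OF sim])
  have Y: "matrix_unit (s i) (s j) 1 \<in> Arv Q 1"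
    using assms(3) unfolding s_def by (intro matrix_unit_in_Arv) (simp del: matpow.simps)
  define X where "X = inv_into (Arv P 1) (V 1) (matrix_unit (s i) (s j) 1)"
  have X: "X \<in> Arv P 1" and VX: "V 1 X = matrix_unit (s i) (s j) 1"
    unfolding X_def using bij_betw_apply[OF bij_betw_inv_into[OF bij] Y]
      bij_betw_inv_into_right[OF bij Y] by auto
  have "V 1 (matrix_unit i j (X i j)) = matrix_unit (s i) (s j) (V 1 X (s i) (s j))"
    unfolding s_def by (rule similarity_matrix_unit[OF sa sim X])
  also have "\<dots> = V 1 X" unfolding VX by simp
  finally have "V 1 (matrix_unit i j (X i j)) = V 1 X" .
  moreover have "matrix_unit i j (X i j) \<in> Arv P 1"
    using Arv_entry_zero[OF X] by (intro matrix_unit_in_Arv) (metis matpow_1)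
  ultimately have "matrix_unit i j (X i j) = X"
    using inj_onD[OF bij_betw_imp_inj_on[OF bij]] X by blast
  moreover have "X \<noteq> (\<lambda>i j. 0)"
    using VX similarity_zero[OF sim, of 1] by (metis matrix_unit_eq_zero_iff one_neq_zero order_refl)
  ultimately have "X i j \<noteq> 0" by (metis matrix_unit_eq_zero_iff)
  then show "P i j \<noteq> 0" using Arv_entry_zero[OF X] by (metis matpow_1)
qed

lemma similarity_pattern:
  fixes P Q :: "'a \<Rightarrow> 'a \<Rightarrow> real"
  assumes "stochastic P" and "stochastic Q"
    and "star_automorphism \<rho>" and "similarity P Q \<rho> V"
  shows "P i j > 0 \<longleftrightarrow> Q (sigma_of \<rho> i) (sigma_of \<rho> j) > 0"
proof -
  have "P i j \<noteq> 0 \<longleftrightarrow> Q (sigma_of \<rho> i) (sigma_of \<rho> j) \<noteq> 0"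
    using similarity_entry_nonzero[OF assms(3,4)] similarity_entry_nonzero_inv[OF assms(3,4)]
    by blast
  moreover have "P i j \<ge> 0" "Q (sigma_of \<rho> i) (sigma_of \<rho> j) \<ge> 0"
    using assms(1,2) unfolding stochastic_def by auto
  ultimately show ?thesis by linarith
qed

section \<open>Powers of finite stochastic matrices\<close>

lemma sum_pos_iff_ex_pos:
  fixes f :: "'b \<Rightarrow> 'c::ordered_comm_monoid_add"
  assumes "finite A" "\<And>x. x \<in> A \<Longrightarrow> 0 \<le> f x"
  shows "0 < sum f A \<longleftrightarrow> (\<exists>x\<in>A. 0 < f x)"
  using assms by (auto simp: less_le sum_nonneg sum_nonneg_eq_0_iff)

context
  fixes P :: "'a \<Rightarrow> 'a \<Rightarrow> real"
  assumes finite_UNIV: "finite (UNIV :: 'a set)"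
begin

lemma matpow_Suc_finite: "matpow P (Suc n) i k = (\<Sum>j\<in>UNIV. matpow P n i j * P j k)"
  using finite_UNIV by simp

lemma matpow_add: "matpow P (n + m) i k = (\<Sum>j\<in>UNIV. matpow P n i j * matpow P m j k)"
proof (induction m arbitrary: k)
  case 0
  have "(\<Sum>j\<in>UNIV. matpow P n i j * matpow P 0 j k) = (\<Sum>j\<in>UNIV. if j = k then matpow P n i j else 0)"
    by (intro sum.cong) auto
  also have "\<dots> = matpow P n i k" using finite_UNIV by simp
  finally show ?case by simp
next
  case (Suc m)
  have "matpow P (n + Suc m) i k = (\<Sum>l\<in>UNIV. matpow P (n + m) i l * P l k)"
    by (simp only: add_Suc_right matpow_Suc_finite)
  also have "\<dots> = (\<Sum>l\<in>UNIV. \<Sum>j\<in>UNIV. matpow P n i j * matpow P m j l * P l k)"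
    by (simp add: Suc sum_distrib_right)
  also have "\<dots> = (\<Sum>j\<in>UNIV. matpow P n i j * (\<Sum>l\<in>UNIV. matpow P m j l * P l k))"
    by (subst sum.swap) (simp add: sum_distrib_left mult.assoc)
  also have "\<dots> = (\<Sum>j\<in>UNIV. matpow P n i j * matpow P (Suc m) j k)"
    by (simp only: matpow_Suc_finite)
  finally show ?case .
qed

lemma matpow_pos_lower_bound_upto:
  "\<exists>c>0. \<forall>n\<le>M. \<forall>i j. 0 < matpow P n i j \<longrightarrow> c \<le> matpow P n i j"
proof -
  define S where "S = insert 1 {x \<in> (\<lambda>(n, i, j). matpow P n i j) ` ({..M} \<times> UNIV). 0 < x}"
  have "finite ({..M} \<times> (UNIV :: ('a \<times> 'a) set))"
    using finite_UNIV by (simp add: finite_prod)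
  then have "finite S" unfolding S_def by simp
  moreover have "S \<noteq> {}" "\<forall>x\<in>S. 0 < x" unfolding S_def by auto
  ultimately have "0 < Min S" by (simp add: Min_gr_iff)
  moreover have "Min S \<le> matpow P n i j" if "n \<le> M" "0 < matpow P n i j" for n i j
  proof (rule Min_le[OF \<open>finite S\<close>])
    show "matpow P n i j \<in> S"
      unfolding S_def using that by (auto intro!: image_eqI[where x = "(n, i, j)"])
  qed
  ultimately show ?thesis by blast
qed

end

definition pos_support :: "('a \<Rightarrow> 'a \<Rightarrow> real) \<Rightarrow> nat \<Rightarrow> ('a \<times> 'a) set" where
  "pos_support P n = {(i, j). 0 < matpow P n i j}"

context
  fixes P :: "'a \<Rightarrow> 'a \<Rightarrow> real"
  assumes finite_UNIV: "finite (UNIV :: 'a set)" and stochastic: "stochastic P"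
begin

lemma stochastic_row_sum: "(\<Sum>j\<in>UNIV. P i j) = 1"
proof -
  have "((\<lambda>j. P i j) has_sum 1) UNIV" using stochastic unfolding stochastic_def by blast
  then show ?thesis using finite_UNIV has_sum_finite has_sum_unique by blast
qed

lemma matpow_nonneg: "0 \<le> matpow P n i j"
proof (induction n arbitrary: j)
  case (Suc n)
  then show ?case
    using stochastic unfolding matpow_Suc_finite[OF finite_UNIV] stochastic_def
    by (intro sum_nonneg) simp
qed simp

lemma matpow_row_sum: "(\<Sum>k\<in>UNIV. matpow P n i k) = 1"
proof (induction n)
  case 0
  then show ?case using finite_UNIV by simp
next
  case (Suc n)
  have "(\<Sum>k\<in>UNIV. matpow P (Suc n) i k) = (\<Sum>k\<in>UNIV. \<Sum>j\<in>UNIV. matpow P n i j * P j k)"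
    unfolding matpow_Suc_finite[OF finite_UNIV] ..
  also have "\<dots> = (\<Sum>j\<in>UNIV. matpow P n i j * (\<Sum>k\<in>UNIV. P j k))"
    by (subst sum.swap) (simp add: sum_distrib_left)
  also have "\<dots> = 1" using Suc by (simp add: stochastic_row_sum)
  finally show ?case .
qed

lemma matpow_le_1: "matpow P n i j \<le> 1"
proof -
  have "matpow P n i j \<le> (\<Sum>k\<in>UNIV. matpow P n i k)"
    using finite_UNIV by (intro member_le_sum) (auto simp: matpow_nonneg)
  then show ?thesis by (simp add: matpow_row_sum)
qed

lemma matpow_add_pos_iff:
  "0 < matpow P (n + m) i k \<longleftrightarrow> (\<exists>j. 0 < matpow P n i j \<and> 0 < matpow P m j k)"
  unfolding matpow_add[OF finite_UNIV]
  using finite_UNIV matpow_nonneg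
  by (subst sum_pos_iff_ex_pos) (auto simp: zero_less_mult_iff less_le)

lemma matpow_add_pos:
  "0 < matpow P n i j \<Longrightarrow> 0 < matpow P m j k \<Longrightarrow> 0 < matpow P (n + m) i k"
  using matpow_add_pos_iff by blast

lemma matpow_mult_pos: "0 < matpow P l a a \<Longrightarrow> 0 < matpow P (l * t) a a"
proof (induction t)
  case (Suc t)
  then have "0 < matpow P (l * t + l) a a" using matpow_add_pos by blast
  then show ?case by (simp add: add.commute)
qed simp

lemma pos_support_add_cong:
  assumes "pos_support P x = pos_support P x'"
  shows "pos_support P (x + y) = pos_support P (x' + y)"
proof -
  have "0 < matpow P x i j \<longleftrightarrow> 0 < matpow P x' i j" for i j
    using assms unfolding pos_support_def by (auto simp: set_eq_iff)
  then show ?thesis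
    unfolding pos_support_def matpow_add_pos_iff by simp
qed

lemma pos_support_repeats: "\<exists>a b. a < b \<and> pos_support P a = pos_support P b"
proof -
  have "finite (UNIV :: ('a \<times> 'a) set)" using finite_UNIV by (simp add: finite_prod)
  then have "finite (range (pos_support P))"
    by (meson Finite_Set.finite_set finite_subset subset_UNIV)
  then have "\<not> inj (pos_support P)"
    using finite_imageD[of "pos_support P" UNIV] by auto
  then obtain a b where "a \<noteq> b" "pos_support P a = pos_support P b"
    unfolding inj_def by blast
  then show ?thesis by (metis linorder_neqE_nat)
qed

text \<open>The support pattern of the powers is eventually periodic, so some power has an
  idempotent support pattern.\<close>
lemma pos_support_idempotent:
  "\<exists>M\<ge>1. \<forall>t\<ge>1. pos_support P (t * M) = pos_support P M"
proof -
  obtain a b where ab: "a < b" "pos_support P a = pos_support P b"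
    using pos_support_repeats by blast
  define p where "p = b - a"
  have p: "p \<ge> 1" using ab unfolding p_def by simp
  have period: "pos_support P (n + p) = pos_support P n" if "n \<ge> a" for n
    using pos_support_add_cong[OF ab(2)[symmetric], of "n - a"] that ab(1)
    unfolding p_def by (simp add: algebra_simps)
  have periods: "pos_support P (n + k * p) = pos_support P n" if "n \<ge> a" for n k
  proof (induction k)
    case (Suc k)
    then show ?case using period[of "n + k * p"] that by (simp add: algebra_simps)
  qed simp
  define M where "M = (a + 1) * p"
  have M: "M \<ge> 1" "M \<ge> a"
    using p unfolding M_def by (simp_all add: trans_le_add2)
  have "pos_support P (t * M) = pos_support P M" if "t \<ge> 1" for t
  proof -
    have "t * M = M + ((t - 1) * (a + 1)) * p"
      using that unfolding M_def by (cases t) (simp_all add: algebra_simps)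
    then show ?thesis using periods[OF M(2)] by simp
  qed
  then show ?thesis using M by blast
qed

text \<open>Here essentiality enters: from any state k reached from i there is a path back to i, and
  hence a loop at k; pushing a path of length \<open>l * M\<close> through the idempotent pattern shows that
  k inherits the \<open>M\<close>-step transitions of every other state reached from i.\<close>
lemma essential_pos_support_shift:
  assumes ess: "essential P" and M: "M \<ge> 1" "\<And>t. t \<ge> 1 \<Longrightarrow> pos_support P (t * M) = pos_support P M"
    and s: "s \<ge> 1" and ik: "0 < matpow P s i k" and ik0: "0 < matpow P s i k0"
    and k0j: "0 < matpow P M k0 j"
  shows "0 < matpow P M k j"
proof -
  have idem: "0 < matpow P (t * M) a b \<longleftrightarrow> 0 < matpow P M a b" if "t \<ge> 1" for t a b
    using M(2)[OF that] unfolding pos_support_def by (auto simp: set_eq_iff)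
  obtain m where m: "m \<ge> 1" "matpow P m k i \<noteq> 0"
    using ess ik s unfolding essential_def by blast
  then have mki: "0 < matpow P m k i"
    using matpow_nonneg[of m k i] by simp
  define l where "l = m + s"
  have lkk: "0 < matpow P l k k"
    unfolding l_def by (rule matpow_add_pos[OF mki ik])
  have lkk0: "0 < matpow P l k k0"
    unfolding l_def by (rule matpow_add_pos[OF mki ik0])
  have "0 < matpow P (l * (M - 1) + l) k k0"
    by (rule matpow_add_pos[OF matpow_mult_pos[OF lkk] lkk0])
  moreover have "l * (M - 1) + l = l * M" using M(1) by (cases M) auto
  ultimately have "0 < matpow P M k k0"
    using idem[of l] m(1) unfolding l_def by (simp add: mult.commute)
  then have "0 < matpow P (2 * M) k j"
    using matpow_add_pos[OF _ k0j] by (simp add: mult_2)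
  then show ?thesis using idem[of 2] by simp
qed

lemma essential_matpow_lower_bound:
  assumes ess: "essential P"
  shows "\<exists>c>0. \<forall>n i j. 0 < matpow P n i j \<longrightarrow> c \<le> matpow P n i j"
proof -
  obtain M where M: "M \<ge> 1" "\<And>t. t \<ge> 1 \<Longrightarrow> pos_support P (t * M) = pos_support P M"
    using pos_support_idempotent by blast
  obtain c where c: "c > 0" "\<And>n i j. n \<le> M \<Longrightarrow> 0 < matpow P n i j \<Longrightarrow> c \<le> matpow P n i j"
    using matpow_pos_lower_bound_upto[OF finite_UNIV, where P = P and M = M] by blast
  have "c \<le> matpow P n i j" if pos: "0 < matpow P n i j" for n i j
  proof (cases "n \<le> M")
    case True
    then show ?thesis using c(2) pos by blast
  next
    case False
    define s where "s = n - M"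
    have s: "s \<ge> 1" "n = s + M" using False unfolding s_def by auto
    obtain k0 where k0: "0 < matpow P s i k0" "0 < matpow P M k0 j"
      using pos s(2) matpow_add_pos_iff by blast
    have "matpow P s i k * c \<le> matpow P s i k * matpow P M k j" for k
    proof (cases "0 < matpow P s i k")
      case True
      then show ?thesis
        using c(2)[OF order_refl essential_pos_support_shift[OF ess M s(1) True k0]]
        by (simp add: mult_left_mono)
    next
      case False
      then show ?thesis
        using matpow_nonneg[of s i k] by simp
    qed
    then have "(\<Sum>k\<in>UNIV. matpow P s i k * c) \<le> matpow P n i j"
      unfolding s(2) matpow_add[OF finite_UNIV] by (rule sum_mono)
    then show ?thesis
      by (simp add: sum_distrib_right[symmetric] matpow_row_sum)
  qed
  then show ?thesis using c(1) by blast
qed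

end

section \<open>Similarities from matching support patterns\<close>

lemma Arv_finite:
  assumes "finite (UNIV :: 'a set)"
  shows "Arv P n = {A :: 'a \<Rightarrow> 'a \<Rightarrow> complex. \<forall>i j. matpow P n i j = 0 \<longrightarrow> A i j = 0}"
  unfolding Arv_def using assms by (auto intro!: bdd_above_finite)

lemma arv_norm_le_reindex:
  fixes A B :: "'a \<Rightarrow> 'a \<Rightarrow> complex"
  assumes fin: "finite (UNIV :: 'a set)" and t: "bij t" and K: "K \<ge> 0"
    and le: "\<And>i j. cmod (B i j) \<le> K * cmod (A (t i) (t j))"
  shows "arv_norm B \<le> K * arv_norm A"
proof -
  define sA where "sA j = (\<Sum>i\<in>UNIV. (cmod (A i j))\<^sup>2)" for j
  define sB where "sB j = (\<Sum>i\<in>UNIV. (cmod (B i j))\<^sup>2)" for j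
  have "sB j \<le> K\<^sup>2 * (SUP j. sA j)" for j
  proof -
    have "sB j \<le> (\<Sum>i\<in>UNIV. K\<^sup>2 * (cmod (A (t i) (t j)))\<^sup>2)"
      unfolding sB_def
    proof (rule sum_mono)
      fix i
      have "(cmod (B i j))\<^sup>2 \<le> (K * cmod (A (t i) (t j)))\<^sup>2"
        using le[of i j] by (intro power_mono) auto
      then show "(cmod (B i j))\<^sup>2 \<le> K\<^sup>2 * (cmod (A (t i) (t j)))\<^sup>2"
        by (simp add: power_mult_distrib)
    qed
    also have "\<dots> = K\<^sup>2 * sA (t j)"
      unfolding sA_def sum_distrib_left
      using sum.reindex_bij_betw[OF t, of "\<lambda>i. K\<^sup>2 * (cmod (A i (t j)))\<^sup>2"] by simp
    also have "\<dots> \<le> K\<^sup>2 * (SUP j. sA j)"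
      using fin by (intro mult_left_mono cSUP_upper bdd_above_finite) auto
    finally show ?thesis .
  qed
  then have "sqrt (SUP j. sB j) \<le> sqrt (K\<^sup>2 * (SUP j. sA j))"
    by (intro real_sqrt_le_mono cSUP_least) auto
  also have "\<dots> = K * sqrt (SUP j. sA j)" using K by (simp add: real_sqrt_mult)
  finally show ?thesis
    unfolding arv_norm_def sA_def sB_def using fin by simp
qed

lemma matpow_pos_bij_transfer:
  fixes P Q :: "'a \<Rightarrow> 'a \<Rightarrow> real"
  assumes fin: "finite (UNIV :: 'a set)" and sP: "stochastic P" and sQ: "stochastic Q"
    and \<sigma>: "bij \<sigma>" and pattern: "\<forall>i j. 0 < P i j \<longleftrightarrow> 0 < Q (\<sigma> i) (\<sigma> j)"
  shows "0 < matpow P n a b \<longleftrightarrow> 0 < matpow Q n (\<sigma> a) (\<sigma> b)"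
proof (induction n arbitrary: b)
  case 0
  then show ?case using \<sigma> by (simp add: bij_def inj_eq)
next
  case (Suc n)
  have "0 < matpow P (n + 1) a b \<longleftrightarrow> (\<exists>j. 0 < matpow P n a j \<and> 0 < matpow P 1 j b)"
    by (rule matpow_add_pos_iff[OF fin sP])
  also have "\<dots> \<longleftrightarrow> (\<exists>j. 0 < matpow Q n (\<sigma> a) (\<sigma> j) \<and> 0 < Q (\<sigma> j) (\<sigma> b))"
    using Suc pattern by (simp del: matpow.simps)
  also have "\<dots> \<longleftrightarrow> (\<exists>l. 0 < matpow Q n (\<sigma> a) l \<and> 0 < matpow Q 1 l (\<sigma> b))"
    using \<sigma> by (simp del: matpow.simps) (metis bij_pointE)
  also have "\<dots> \<longleftrightarrow> 0 < matpow Q (n + 1) (\<sigma> a) (\<sigma> b)"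
    by (rule matpow_add_pos_iff[OF fin sQ, symmetric])
  finally show ?case by simp
qed

lemma sqrt_ratio_le:
  fixes a b c :: real
  assumes "0 \<le> a" "a \<le> 1" "0 < c" "c \<le> b"
  shows "sqrt a / sqrt b \<le> 1 / sqrt c"
  using assms by (intro frac_le) auto

text \<open>The entry \<open>(\<tau> i, \<tau> j)\<close> of \<open>A \<in> Arv(P)_n\<close> moves to \<open>(i, j)\<close> and is rescaled by
  \<open>sqrt (P^n) / sqrt (Q^n)\<close>; these factors turn the weights \<open>sqrtP\<close> and \<open>flat\<close> occurring in
  \<open>UP P\<close> exactly into those of \<open>UP Q\<close>.\<close>
definition sim_weight ::
  "('a \<Rightarrow> 'a \<Rightarrow> real) \<Rightarrow> ('a \<Rightarrow> 'a \<Rightarrow> real) \<Rightarrow> ('a \<Rightarrow> 'a) \<Rightarrow> nat \<Rightarrow> 'a \<Rightarrow> 'a \<Rightarrow> real" where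
  "sim_weight P Q \<tau> n i j = sqrt (matpow P n (\<tau> i) (\<tau> j)) / sqrt (matpow Q n i j)"

definition sim_map where
  "sim_map P Q \<tau> n A = (\<lambda>i j. complex_of_real (sim_weight P Q \<tau> n i j) * A (\<tau> i) (\<tau> j))"

text \<open>Where the weight vanishes, division by 0 yields 0, which is exactly the forced zero entry
  of \<open>Arv(P)_n\<close>.\<close>
definition sim_map_inv where
  "sim_map_inv P Q \<sigma> \<tau> n B =
     (\<lambda>a b. B (\<sigma> a) (\<sigma> b) / complex_of_real (sim_weight P Q \<tau> n (\<sigma> a) (\<sigma> b)))"

context
  fixes P Q :: "'a \<Rightarrow> 'a \<Rightarrow> real" and \<sigma> :: "'a \<Rightarrow> 'a"
  assumes fin: "finite (UNIV :: 'a set)" and sP: "stochastic P" and sQ: "stochastic Q"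
    and eP: "essential P" and eQ: "essential Q"
    and \<sigma>: "bij \<sigma>" and pattern: "\<forall>i j. 0 < P i j \<longleftrightarrow> 0 < Q (\<sigma> i) (\<sigma> j)"
begin

abbreviation "\<tau> \<equiv> inv \<sigma>"
abbreviation "w \<equiv> sim_weight P Q \<tau>"
abbreviation "V \<equiv> sim_map P Q \<tau>"
abbreviation "W \<equiv> sim_map_inv P Q \<sigma> \<tau>"

lemma \<sigma>_\<tau> [simp]: "\<sigma> (\<tau> i) = i"
  using \<sigma> by (simp add: bij_is_surj surj_f_inv_f)

lemma \<tau>_\<sigma> [simp]: "\<tau> (\<sigma> a) = a"
  using \<sigma> by (simp add: bij_is_inj inv_f_f)

lemma bij_\<tau>: "bij \<tau>"
  using \<sigma> by (simp add: bij_imp_bij_inv)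

lemma matpow_eq_0_transfer: "matpow P n (\<tau> i) (\<tau> j) = 0 \<longleftrightarrow> matpow Q n i j = 0"
  using matpow_pos_bij_transfer[OF fin sP sQ \<sigma> pattern, of n "\<tau> i" "\<tau> j"]
    matpow_nonneg[OF fin sP, of n "\<tau> i" "\<tau> j"] matpow_nonneg[OF fin sQ, of n i j]
  by auto

lemma sim_weight_nonneg: "0 \<le> w n i j"
  unfolding sim_weight_def using matpow_nonneg[OF fin sP] matpow_nonneg[OF fin sQ] by simp

lemma sim_weight_eq_0_iff: "w n i j = 0 \<longleftrightarrow> matpow Q n i j = 0"
  unfolding sim_weight_def
  using matpow_eq_0_transfer[of n i j] matpow_nonneg[OF fin sP, of n "\<tau> i" "\<tau> j"]
    matpow_nonneg[OF fin sQ, of n i j]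
  by auto

lemma sim_weight_0: "w 0 i j = (if i = j then 1 else 0)"
  using bij_\<tau> by (auto simp: sim_weight_def bij_def inj_eq)

lemma sqrtP_mult_sim_weight: "sqrtP Q n i j * w n i j = sqrtP P n (\<tau> i) (\<tau> j)"
  using matpow_eq_0_transfer[of n i j] by (auto simp: sqrtP_def sim_weight_def)

lemma sim_weight_mult_flat: "w n i k * flat (sqrtP P n) (\<tau> i) (\<tau> k) = flat (sqrtP Q n) i k"
  using matpow_pos_bij_transfer[OF fin sP sQ \<sigma> pattern, of n "\<tau> i" "\<tau> k"]
  by (auto simp: flat_def sqrtP_def sim_weight_def)

lemma sim_weight_bounds: "\<exists>K\<ge>0. \<forall>n i j. w n i j \<le> K \<and> (w n i j \<noteq> 0 \<longrightarrow> 1 / w n i j \<le> K)"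
proof -
  obtain cP where cP: "cP > 0" "\<And>n i j. 0 < matpow P n i j \<Longrightarrow> cP \<le> matpow P n i j"
    using essential_matpow_lower_bound[OF fin sP eP] by blast
  obtain cQ where cQ: "cQ > 0" "\<And>n i j. 0 < matpow Q n i j \<Longrightarrow> cQ \<le> matpow Q n i j"
    using essential_matpow_lower_bound[OF fin sQ eQ] by blast
  define K where "K = max (1 / sqrt cP) (1 / sqrt cQ)"
  have "w n i j \<le> K \<and> (w n i j \<noteq> 0 \<longrightarrow> 1 / w n i j \<le> K)" for n i j
  proof (cases "matpow Q n i j = 0")
    case True
    then have "w n i j = 0" using sim_weight_eq_0_iff by blast
    then show ?thesis using cP(1) by (simp add: K_def le_max_iff_disj)
  next
    case False
    then have Q: "0 < matpow Q n i j" using matpow_nonneg[OF fin sQ, of n i j] by simp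
    then have P: "0 < matpow P n (\<tau> i) (\<tau> j)"
      using matpow_pos_bij_transfer[OF fin sP sQ \<sigma> pattern, of n "\<tau> i" "\<tau> j"] by simp
    have "w n i j \<le> 1 / sqrt cQ"
      unfolding sim_weight_def using P cQ Q matpow_le_1[OF fin sP]
      by (intro sqrt_ratio_le) auto
    moreover have "1 / w n i j = sqrt (matpow Q n i j) / sqrt (matpow P n (\<tau> i) (\<tau> j))"
      unfolding sim_weight_def by simp
    moreover have "\<dots> \<le> 1 / sqrt cP"
      using P cP Q matpow_le_1[OF fin sQ] by (intro sqrt_ratio_le) auto
    ultimately show ?thesis unfolding K_def by auto
  qed
  moreover have "K \<ge> 0" using cP(1) unfolding K_def by (simp add: le_max_iff_disj)
  ultimately show ?thesis by blast
qed

lemma matmul_sim_map: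
  "matmul (\<lambda>i j. complex_of_real (sqrtP Q n i j) * V n A i j)
          (\<lambda>j k. complex_of_real (sqrtP Q m j k) * V m B j k) i k
   = matmul (\<lambda>i j. complex_of_real (sqrtP P n i j) * A i j)
            (\<lambda>j k. complex_of_real (sqrtP P m j k) * B j k) (\<tau> i) (\<tau> k)"
proof -
  define h where "h j = complex_of_real (sqrtP P n (\<tau> i) j) * A (\<tau> i) j *
      (complex_of_real (sqrtP P m j (\<tau> k)) * B j (\<tau> k))" for j
  have weight: "complex_of_real (sqrtP Q l a b) * complex_of_real (w l a b)
                 = complex_of_real (sqrtP P l (\<tau> a) (\<tau> b))" for l a b
    by (simp only: of_real_mult[symmetric] sqrtP_mult_sim_weight)
  have "complex_of_real (sqrtP Q n i j) * V n A i j * (complex_of_real (sqrtP Q m j k) * V m B j k)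
        = h (\<tau> j)" for j
    unfolding sim_map_def h_def mult.assoc[symmetric] weight by (simp add: mult.assoc)
  then have "matmul (\<lambda>i j. complex_of_real (sqrtP Q n i j) * V n A i j)
          (\<lambda>j k. complex_of_real (sqrtP Q m j k) * V m B j k) i k = (\<Sum>j\<in>UNIV. h (\<tau> j))"
    unfolding matmul_def using fin by simp
  also have "\<dots> = (\<Sum>j\<in>UNIV. h j)"
    using sum.reindex_bij_betw[OF bij_\<tau>, of h] by simp
  finally show ?thesis
    unfolding matmul_def h_def using fin by simp
qed

lemma sim_map_UP: "V (n + m) (UP P n m A B) = UP Q n m (V n A) (V m B)"
proof (intro ext)
  fix i k
  consider "n = 0" | "n \<noteq> 0" "m = 0" | "n \<noteq> 0" "m \<noteq> 0" by blast
  then show "V (n + m) (UP P n m A B) i k = UP Q n m (V n A) (V m B) i k"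
  proof cases
    case 3
    let ?AB = "matmul (\<lambda>i j. complex_of_real (sqrtP P n i j) * A i j)
                 (\<lambda>j k. complex_of_real (sqrtP P m j k) * B j k) (\<tau> i) (\<tau> k)"
    have "V (n + m) (UP P n m A B) i k
          = complex_of_real (w (n + m) i k) * complex_of_real (flat (sqrtP P (n + m)) (\<tau> i) (\<tau> k)) * ?AB"
      using 3 unfolding sim_map_def UP_def by (simp add: mult.assoc)
    also have "\<dots> = complex_of_real (flat (sqrtP Q (n + m)) i k) * ?AB"
      by (simp only: of_real_mult[symmetric] sim_weight_mult_flat)
    also have "\<dots> = UP Q n m (V n A) (V m B) i k"
      using 3 unfolding UP_def matmul_sim_map by simp
    finally show ?thesis .
  qed (simp_all add: UP_def sim_map_def sim_weight_0)
qed

lemma sim_map_in_Arv: "A \<in> Arv P n \<Longrightarrow> V n A \<in> Arv Q n"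
  unfolding Arv_finite[OF fin] sim_map_def by (simp add: sim_weight_eq_0_iff)

lemma sim_map_inv_in_Arv: "B \<in> Arv Q n \<Longrightarrow> W n B \<in> Arv P n"
  unfolding Arv_finite[OF fin] sim_map_inv_def
  using matpow_eq_0_transfer[of n "\<sigma> _" "\<sigma> _"] by simp

lemma sim_map_inv_sim_map: "A \<in> Arv P n \<Longrightarrow> W n (V n A) = A"
  unfolding Arv_finite[OF fin] sim_map_inv_def sim_map_def
  by (auto simp: fun_eq_iff sim_weight_eq_0_iff matpow_eq_0_transfer[symmetric])

lemma sim_map_sim_map_inv: "B \<in> Arv Q n \<Longrightarrow> V n (W n B) = B"
  unfolding Arv_finite[OF fin] sim_map_inv_def sim_map_def
  by (auto simp: fun_eq_iff sim_weight_eq_0_iff)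

lemma bij_betw_sim_map: "bij_betw (V n) (Arv P n) (Arv Q n)"
  by (rule bij_betw_byWitness[where f' = "W n"])
     (auto simp: sim_map_inv_sim_map sim_map_sim_map_inv sim_map_in_Arv sim_map_inv_in_Arv)

lemma inv_into_sim_map: "B \<in> Arv Q n \<Longrightarrow> inv_into (Arv P n) (V n) B = W n B"
  using bij_betw_sim_map[of n] sim_map_inv_in_Arv sim_map_sim_map_inv
  by (metis bij_betw_imp_inj_on inv_into_f_f)

lemma sim_map_norm_bounds:
  "\<exists>C. \<forall>n. (\<forall>A. arv_norm (V n A) \<le> C * arv_norm A) \<and> (\<forall>B. arv_norm (W n B) \<le> C * arv_norm B)"
proof -
  obtain K where K: "K \<ge> 0" "\<And>n i j. w n i j \<le> K" "\<And>n i j. w n i j \<noteq> 0 \<Longrightarrow> 1 / w n i j \<le> K"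
    using sim_weight_bounds by blast
  have "arv_norm (V n A) \<le> K * arv_norm A" for n A
  proof (rule arv_norm_le_reindex[OF fin bij_\<tau> K(1)])
    fix i j
    show "cmod (V n A i j) \<le> K * cmod (A (\<tau> i) (\<tau> j))"
      unfolding sim_map_def using K(2) sim_weight_nonneg
      by (simp add: norm_mult mult_right_mono)
  qed
  moreover have "arv_norm (W n B) \<le> K * arv_norm B" for n B
  proof (rule arv_norm_le_reindex[OF fin \<sigma> K(1)])
    fix a b
    have "cmod (W n B a b) = (if w n (\<sigma> a) (\<sigma> b) = 0 then 0 else 1 / w n (\<sigma> a) (\<sigma> b))
                               * cmod (B (\<sigma> a) (\<sigma> b))"
      unfolding sim_map_inv_def using sim_weight_nonneg by (simp add: norm_divide)
    also have "\<dots> \<le> K * cmod (B (\<sigma> a) (\<sigma> b))"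
      using K by (intro mult_right_mono) auto
    finally show "cmod (W n B a b) \<le> K * cmod (B (\<sigma> a) (\<sigma> b))" .
  qed
  ultimately show ?thesis by blast
qed

lemma similarity_sim_map: "similarity P Q (rho_of \<sigma>) V"
  unfolding similarity_def
proof (intro conjI)
  show "\<forall>f\<in>linf. V 0 (diagm f) = diagm (rho_of \<sigma> f)"
    using bij_\<tau> by (auto simp: sim_map_def diagm_def rho_of_def sim_weight_0 bij_def inj_eq fun_eq_iff)
  show "\<exists>C. \<forall>n\<ge>1. (\<forall>A\<in>Arv P n. arv_norm (V n A) \<le> C * arv_norm A) \<and>
              (\<forall>B\<in>Arv Q n. arv_norm (inv_into (Arv P n) (V n) B) \<le> C * arv_norm B)"
    using sim_map_norm_bounds inv_into_sim_map by metis
  show "\<forall>n\<ge>1. bij_betw (V n) (Arv P n) (Arv Q n)"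
    using bij_betw_sim_map by blast
  show "\<forall>n\<ge>1. \<forall>A\<in>Arv P n. \<forall>B\<in>Arv P n. V n (\<lambda>i j. A i j + B i j) = (\<lambda>i j. V n A i j + V n B i j)"
    unfolding sim_map_def by (simp add: distrib_left)
  show "\<forall>n\<ge>1. \<forall>c. \<forall>A\<in>Arv P n. V n (\<lambda>i j. c * A i j) = (\<lambda>i j. c * V n A i j)"
    unfolding sim_map_def by (simp add: mult.left_commute)
  show "\<forall>n\<ge>1. \<forall>a\<in>linf. \<forall>b\<in>linf. \<forall>X\<in>Arv P n.
          V n (bimod a X b) = bimod (rho_of \<sigma> a) (V n X) (rho_of \<sigma> b)"
    unfolding sim_map_def bimod_def rho_of_def by (simp add: mult.left_commute mult.assoc)
  show "\<forall>n m. \<forall>A\<in>Arv P n. \<forall>B\<in>Arv P m. V (n + m) (UP P n m A B) = UP Q n m (V n A) (V m B)"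
    using sim_map_UP by blast
qed

end

theorem mainTheorem10:
  fixes P Q :: "'a::countable \<Rightarrow> 'a \<Rightarrow> real"
  assumes "stochastic P" and "stochastic Q"
  shows "(\<forall>\<rho>. star_automorphism \<rho> \<and> (\<exists>V. similarity P Q \<rho> V) \<longrightarrow>
            (\<forall>i j. P i j > 0 \<longleftrightarrow> Q (sigma_of \<rho> i) (sigma_of \<rho> j) > 0))
       \<and> (finite (UNIV :: 'a set) \<and> essential P \<and> essential Q \<longrightarrow>
            (\<forall>\<sigma>. bij \<sigma> \<and> (\<forall>i j. P i j > 0 \<longleftrightarrow> Q (\<sigma> i) (\<sigma> j) > 0) \<longrightarrow>
               (\<exists>V. similarity P Q (rho_of \<sigma>) V)))"
proof (intro conjI allI impI)
  fix \<rho> i j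
  assume "star_automorphism \<rho> \<and> (\<exists>V. similarity P Q \<rho> V)"
  then show "P i j > 0 \<longleftrightarrow> Q (sigma_of \<rho> i) (sigma_of \<rho> j) > 0"
    using similarity_pattern[OF assms] by blast
next
  fix \<sigma> :: "'a \<Rightarrow> 'a"
  assume "finite (UNIV :: 'a set) \<and> essential P \<and> essential Q"
    and "bij \<sigma> \<and> (\<forall>i j. P i j > 0 \<longleftrightarrow> Q (\<sigma> i) (\<sigma> j) > 0)"
  then show "\<exists>V. similarity P Q (rho_of \<sigma>) V"
    using similarity_sim_map[of P Q \<sigma>] assms by blast
qed

end
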